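(* In the top-$k$ allocation setting, the audit policy \textsc{uniform-k} is $\varepsilon^*$-DSIC where $\varepsilon^*$ is the smallest $\varepsilon$ for which some audit policy with budget $B$ is $\varepsilon$-DSIC; i.e. \textsc{uniform-k} is an optimal audit policy under the dominant-strategy incentive compatibility criterion.
   Context: Model: there are $n$ agents. Agent $i$ has a true type $\mathbf{a}_i=(\mathbf{x}_i,\mathbf{z}_i)$, where $\mathbf{x}_i$ is a known (verifiable) partial type and $\mathbf{z}_i\in I^s$ is a self-reported partial type. Agent $i$ reports $\mathbf{a}_i'=(\mathbf{x}_i,\mathbf{z}_i')$. In the top-$k$ allocation setting, resources go to the $k$ agents with the highest reported scores under a score function $f$; $\alpha_i(f,\mathcal{A}')\in\{0,1\}$ indicates allocation to agent $i$ given reports $\mathcal{A}'$. An audit policy maps each set of reports $\mathcal{A}'$ to probabilities $\phi_i(\mathcal{A}')\in[0,1]$ with $\sum_i\phi_i(\mathcal{A}')\le B$. An audited liar loses the resource and pays penalty $c\ge0$: a lying agent's utility is $\alpha_i(f,\mathcal{A}')(1-\phi_i(\mathcal{A}'))-c\,\phi_i(\mathcal{A}')$, a truthful agent's utility is $\alpha_i(f,\mathcal{A})$. A policy $\phi$ is $\varepsilon$-DSIC if for every agent $i$, every true type $\mathbf{a}_i$, every report $\mathbf{a}_i'$ with the same known part $\mathbf{x}_i$, and every profile of other agents' reports $\mathcal{A}'_{-i}$, the expected utility (over the randomness of auditing) of reporting truthfully is at least the expected utility of reporting $\mathbf{a}_i'$ minus $\varepsilon$. The policy \textsc{uniform-k}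 audits each agent among the $k$ highest-scoring reports in $\mathcal{A}'$ with probability $\min(1,B/k)$ and audits no other agent. *)

theory Defs
  imports Complex_Main "HOL-Library.FuncSet"
begin

text \<open>A type is a pair (x, z): x is the known
 (verifiable) partial type, z the self-reported partial type, a real vector in I^s
 represented as a list of length s with entries in I.\<close>

definition self_types :: "real set \<Rightarrow> nat \<Rightarrow> real list set" where
  "self_types I s = {z. length z = s \<and> set z \<subseteq> I}"

definition profiles :: "nat \<Rightarrow> real set \<Rightarrow> nat \<Rightarrow> (nat \<Rightarrow> 'x \<times> real list) set" where
  "profiles n I s = ({..<n} \<rightarrow>\<^sub>E (UNIV \<times> self_types I s))"

definition score :: "('x \<Rightarrow> real list \<Rightarrow> real) \<Rightarrow> (nat \<Rightarrow> 'x \<times> real list) \<Rightarrow> nat \<Rightarrow> real" where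
  "score f A j = f (fst (A j)) (snd (A j))"

definition in_top_k :: "nat \<Rightarrow> nat \<Rightarrow> ('x \<Rightarrow> real list \<Rightarrow> real) \<Rightarrow> (nat \<Rightarrow> 'x \<times> real list) \<Rightarrow> nat \<Rightarrow> bool" where
  "in_top_k n k f A i \<longleftrightarrow> i < n \<and>
     card {j \<in> {..<n}. j \<noteq> i \<and> (score f A j > score f A i \<or> (score f A j = score f A i \<and> j < i))} < k"

definition alloc :: "nat \<Rightarrow> nat \<Rightarrow> ('x \<Rightarrow> real list \<Rightarrow> real) \<Rightarrow> (nat \<Rightarrow> 'x \<times> real list) \<Rightarrow> nat \<Rightarrow> real" where
  "alloc n k f A i = (if in_top_k n k f A i then 1 else 0)"

type_synonym 'x policy = "(nat \<Rightarrow> 'x \<times> real list) \<Rightarrow> nat \<Rightarrow> real"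

definition budget_ok :: "nat \<Rightarrow> real set \<Rightarrow> nat \<Rightarrow> real \<Rightarrow> 'x policy \<Rightarrow> bool" where
  "budget_ok n I s B \<phi> \<longleftrightarrow> (\<forall>A \<in> profiles n I s.
      (\<forall>i<n. 0 \<le> \<phi> A i \<and> \<phi> A i \<le> 1) \<and> (\<Sum>i<n. \<phi> A i) \<le> B)"

text \<open>Expected utility of agent i with true profile A (A i the true type, the other
 entries the other agents' reports) when it reports z'.\<close>
definition utility :: "nat \<Rightarrow> nat \<Rightarrow> ('x \<Rightarrow> real list \<Rightarrow> real) \<Rightarrow> real \<Rightarrow> 'x policy
    \<Rightarrow> (nat \<Rightarrow> 'x \<times> real list) \<Rightarrow> nat \<Rightarrow> real list \<Rightarrow> real" where
  "utility n k f c \<phi> A i z' =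
     (if z' = snd (A i) then alloc n k f A i
      else (let A' = A(i := (fst (A i), z')) in
            alloc n k f A' i * (1 - \<phi> A' i) - c * \<phi> A' i))"

definition eps_DSIC :: "nat \<Rightarrow> nat \<Rightarrow> real set \<Rightarrow> nat \<Rightarrow> ('x \<Rightarrow> real list \<Rightarrow> real) \<Rightarrow> real
    \<Rightarrow> 'x policy \<Rightarrow> real \<Rightarrow> bool" where
  "eps_DSIC n k I s f c \<phi> \<epsilon> \<longleftrightarrow>
     (\<forall>A \<in> profiles n I s. \<forall>i<n. \<forall>z' \<in> self_types I s.
        utility n k f c \<phi> A i (snd (A i)) \<ge> utility n k f c \<phi> A i z' - \<epsilon>)"

definition uniform_k :: "nat \<Rightarrow> nat \<Rightarrow> ('x \<Rightarrow> real list \<Rightarrow> real) \<Rightarrow> real \<Rightarrow> 'x policy" where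
  "uniform_k n k f B A i = (if in_top_k n k f A i then min 1 (B / real k) else 0)"

end

theory Submission
  imports Defs "HOL-Library.Product_Lexorder"
begin

text \<open>Uniform-k audits every agent that ends up in the top k with probability
  p = min 1 (B/k), so a lie can gain at most 1 - p(1 + c), and only when it moves a
  losing agent into the top k. Conversely, whenever such a lie exists, consider the
  profile in which all n > k agents report the lie: some winner j of it is audited with
  probability at most B/k by any budgeted policy, and if j's true type is the losing one,
  j gains at least 1 - p(1 + c) by lying.\<close>

text \<open>Agent j is ranked above agent i iff its key is lexicographically larger: the
  higher score wins and ties go to the smaller index.\<close>

definition rank_key ::
    "('x \<Rightarrow> real list \<Rightarrow> real) \<Rightarrow> (nat \<Rightarrow> 'x \<times> real list) \<Rightarrow> nat \<Rightarrow> real \<times> int"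
  where "rank_key f A j = (score f A j, - int j)"

definition ranked_above ::
    "nat \<Rightarrow> ('x \<Rightarrow> real list \<Rightarrow> real) \<Rightarrow> (nat \<Rightarrow> 'x \<times> real list) \<Rightarrow> nat \<Rightarrow> nat set"
  where "ranked_above n f A i = {j \<in> {..<n}. rank_key f A i < rank_key f A j}"

lemma in_top_k_iff_card_ranked_above:
  "in_top_k n k f A i \<longleftrightarrow> i < n \<and> card (ranked_above n f A i) < k"
proof -
  have "ranked_above n f A i =
      {j \<in> {..<n}. j \<noteq> i \<and> (score f A j > score f A i \<or> (score f A j = score f A i \<and> j < i))}"
    by (auto simp: ranked_above_def rank_key_def)
  then show ?thesis
    by (simp add: in_top_k_def)
qed

lemma rank_key_less_iff:
  "rank_key f A i < rank_key f A j \<longleftrightarrow> score f A i < score f A j \<or> score f A i = score f A j \<and> j < i"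
  by (auto simp: rank_key_def)

lemma card_ranked_above_less:
  assumes "i < n"
  shows "card (ranked_above n f A i) < n"
proof -
  have "ranked_above n f A i \<subseteq> {..<n} - {i}"
    by (auto simp: ranked_above_def)
  then have "card (ranked_above n f A i) \<le> card ({..<n} - {i})"
    by (intro card_mono) simp_all
  with assms show ?thesis
    by simp
qed

lemma card_in_top_k_le: "card {i \<in> {..<n}. in_top_k n k f A i} \<le> k"
proof (rule ccontr)
  define T where "T = {i \<in> {..<n}. in_top_k n k f A i}"
  assume "\<not> card {i \<in> {..<n}. in_top_k n k f A i} \<le> k"
  then have card_T: "k < card T"
    by (simp add: T_def)
  have "finite T"
    by (simp add: T_def)
  with card_T have "T \<noteq> {}"
    by auto
  then obtain m where "is_arg_min (rank_key f A) (\<lambda>j. j \<in> T) m"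
    using ex_is_arg_min_if_finite[OF \<open>finite T\<close>] by blast
  then have m: "m \<in> T" and m_min: "\<And>j. j \<in> T \<Longrightarrow> \<not> rank_key f A j < rank_key f A m"
    by (auto simp: is_arg_min_def)
  have "T - {m} \<subseteq> ranked_above n f A m"
  proof
    fix j assume j: "j \<in> T - {m}"
    then have "rank_key f A j \<noteq> rank_key f A m"
      by (simp add: rank_key_def)
    with m_min[of j] j show "j \<in> ranked_above n f A m"
      by (auto simp: ranked_above_def T_def)
  qed
  then have "card (T - {m}) \<le> card (ranked_above n f A m)"
    by (intro card_mono) (simp_all add: ranked_above_def)
  moreover have "card (ranked_above n f A m) < k"
    using m by (simp add: T_def in_top_k_iff_card_ranked_above)
  ultimately show False
    using m card_T \<open>finite T\<close> by simp
qed

lemma not_in_top_k_imp_less: "i < n \<Longrightarrow> \<not> in_top_k n k f A i \<Longrightarrow> k < n"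
  using card_ranked_above_less[of i n f A] by (simp add: in_top_k_iff_card_ranked_above)

lemma in_top_k_if_score_le:
  assumes "in_top_k n k f A' i"
    and "\<And>j. j \<noteq> i \<Longrightarrow> score f A j = score f A' j"
    and "score f A' i \<le> score f A i"
  shows "in_top_k n k f A i"
proof -
  have "ranked_above n f A i \<subseteq> ranked_above n f A' i"
  proof
    fix j assume "j \<in> ranked_above n f A i"
    then have "j < n" "j \<noteq> i" and "rank_key f A i < rank_key f A j"
      by (auto simp: ranked_above_def)
    with assms(2)[of j] assms(3) show "j \<in> ranked_above n f A' i"
      by (auto simp: ranked_above_def rank_key_less_iff)
  qed
  then have "card (ranked_above n f A i) \<le> card (ranked_above n f A' i)"
    by (intro card_mono) (simp_all add: ranked_above_def)
  with assms(1) show ?thesis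
    by (simp add: in_top_k_iff_card_ranked_above)
qed

lemma in_top_k_if_scores_equal:
  assumes "\<And>l. l < n \<Longrightarrow> score f A l = v" and "j < n" and "j < k"
  shows "in_top_k n k f A j"
proof -
  have "ranked_above n f A j = {..<j}"
    using assms by (auto simp: ranked_above_def rank_key_def)
  with assms show ?thesis
    by (simp add: in_top_k_iff_card_ranked_above)
qed

lemma not_in_top_k_if_lowest_score:
  assumes "\<And>l. l < n \<Longrightarrow> l \<noteq> j \<Longrightarrow> score f A j < score f A l" and "j < n" and "k < n"
  shows "\<not> in_top_k n k f A j"
proof -
  have "ranked_above n f A j = {..<n} - {j}"
    using assms(1) by (auto simp: ranked_above_def rank_key_def)
  with assms(2,3) show ?thesis
    by (simp add: in_top_k_iff_card_ranked_above)
qed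

lemma snd_profile_in_self_types: "A \<in> profiles n I s \<Longrightarrow> i < n \<Longrightarrow> snd (A i) \<in> self_types I s"
  by (force simp: profiles_def PiE_iff)

lemma profile_update_in_profiles:
  "A \<in> profiles n I s \<Longrightarrow> i < n \<Longrightarrow> z \<in> self_types I s \<Longrightarrow> A(i := (x, z)) \<in> profiles n I s"
  by (auto simp: profiles_def PiE_iff extensional_def)

lemma constant_profile_in_profiles:
  "z \<in> self_types I s \<Longrightarrow> (\<lambda>j. if j < n then (x, z) else undefined) \<in> profiles n I s"
  by (auto simp: profiles_def PiE_iff extensional_def)

definition deviation_gain :: "nat \<Rightarrow> nat \<Rightarrow> ('x \<Rightarrow> real list \<Rightarrow> real) \<Rightarrow> real \<Rightarrow> 'x policy
    \<Rightarrow> (nat \<Rightarrow> 'x \<times> real list) \<Rightarrow> nat \<Rightarrow> real list \<Rightarrow> real"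
  where "deviation_gain n k f c \<phi> A i z' =
    utility n k f c \<phi> A i z' - utility n k f c \<phi> A i (snd (A i))"

lemma eps_DSIC_iff_deviation_gain_le:
  "eps_DSIC n k I s f c \<phi> \<epsilon> \<longleftrightarrow>
     (\<forall>A \<in> profiles n I s. \<forall>i<n. \<forall>z' \<in> self_types I s. deviation_gain n k f c \<phi> A i z' \<le> \<epsilon>)"
  by (simp add: eps_DSIC_def deviation_gain_def algebra_simps)

lemma eps_DSIC_nonneg:
  fixes \<phi> :: "'x policy" and A :: "nat \<Rightarrow> 'x \<times> real list"
  assumes "eps_DSIC n k I s f c \<phi> \<epsilon>" and "A \<in> profiles n I s" and "i < n"
  shows "0 \<le> \<epsilon>"
proof -
  have "deviation_gain n k f c \<phi> A i (snd (A i)) \<le> \<epsilon>"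
    using assms snd_profile_in_self_types[OF assms(2,3)] by (simp add: eps_DSIC_iff_deviation_gain_le)
  then show ?thesis
    by (simp add: deviation_gain_def)
qed

lemma deviation_gain_lie_entering_top_k:
  assumes "z' \<noteq> snd (A i)" and "\<not> in_top_k n k f A i" and "in_top_k n k f (A(i := (fst (A i), z'))) i"
  shows "deviation_gain n k f c \<phi> A i z' = 1 - (1 + c) * \<phi> (A(i := (fst (A i), z'))) i"
  using assms by (simp add: deviation_gain_def utility_def alloc_def Let_def algebra_simps)

lemma budget_ok_uniform_k:
  assumes "k \<ge> 1" and "B \<ge> 0"
  shows "budget_ok n I s B (uniform_k n k f B)"
  unfolding budget_ok_def
proof (intro ballI conjI allI impI)
  fix A i
  show "0 \<le> uniform_k n k f B A i" "uniform_k n k f B A i \<le> 1"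
    using assms by (auto simp: uniform_k_def)
next
  fix A
  define p where "p = min 1 (B / real k)"
  have "(\<Sum>i<n. uniform_k n k f B A i) = p * real (card {i \<in> {..<n}. in_top_k n k f A i})"
    by (simp add: uniform_k_def p_def sum.If_cases Int_def)
  also have "\<dots> \<le> B / real k * real k"
    using card_in_top_k_le[of n k f A] assms
    by (intro mult_mono) (auto simp: p_def)
  also have "\<dots> = B"
    using assms by simp
  finally show "(\<Sum>i<n. uniform_k n k f B A i) \<le> B" .
qed

lemma deviation_gain_uniform_k:
  assumes "k \<ge> 1" and "B \<ge> 0" and "c \<ge> 0"
  shows "deviation_gain n k f c (uniform_k n k f B) A i z' \<le> 0
    \<or> z' \<noteq> snd (A i) \<and> \<not> in_top_k n k f A i \<and> in_top_k n k f (A(i := (fst (A i), z'))) i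
      \<and> deviation_gain n k f c (uniform_k n k f B) A i z' = 1 - (1 + c) * min 1 (B / real k)"
proof -
  have "0 \<le> (1 + c) * min 1 (B / real k)"
    using assms by simp
  then show ?thesis
    using assms
    by (auto simp: deviation_gain_def utility_def uniform_k_def alloc_def Let_def algebra_simps)
qed

lemma ex_le_average:
  fixes g :: "'a \<Rightarrow> real"
  assumes "finite K" and "K \<noteq> {}" and "sum g K \<le> B"
  shows "\<exists>j \<in> K. g j \<le> B / real (card K)"
proof (rule ccontr)
  assume "\<not> ?thesis"
  then have "(\<Sum>j\<in>K. B / real (card K)) < sum g K"
    using assms(1,2) by (intro sum_strict_mono) auto
  with assms show False
    by simp
qed

lemma budget_ok_ex_low_audit:
  assumes "budget_ok n I s B \<phi>" and "P \<in> profiles n I s" and "1 \<le> k" and "k \<le> n"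
  shows "\<exists>j<k. 0 \<le> \<phi> P j \<and> \<phi> P j \<le> min 1 (B / real k)"
proof -
  have prob: "\<forall>j<n. 0 \<le> \<phi> P j \<and> \<phi> P j \<le> 1" and "(\<Sum>j<n. \<phi> P j) \<le> B"
    using assms(1,2) by (auto simp: budget_ok_def)
  moreover have "(\<Sum>j<k. \<phi> P j) \<le> (\<Sum>j<n. \<phi> P j)"
    using prob assms(4) by (intro sum_mono2) auto
  ultimately obtain j where "j < k" and "\<phi> P j \<le> B / real k"
    using ex_le_average[of "{..<k}" "\<phi> P" B] assms(3) by (auto simp: lessThan_empty_iff)
  with prob assms(4) show ?thesis
    by auto
qed

lemma eps_DSIC_lower_bound:
  assumes "k \<ge> 1" and "c \<ge> 0"
    and A: "A \<in> profiles n I s" and "i < n" and z': "z' \<in> self_types I s"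
    and loses: "\<not> in_top_k n k f A i" and wins: "in_top_k n k f (A(i := (fst (A i), z'))) i"
    and budget: "budget_ok n I s B \<phi>" and DSIC: "eps_DSIC n k I s f c \<phi> \<epsilon>"
  shows "1 - (1 + c) * min 1 (B / real k) \<le> \<epsilon>"
proof -
  define x where "x = fst (A i)"
  define z where "z = snd (A i)"
  have score_lt: "f x z < f x z'"
  proof (rule ccontr)
    assume "\<not> f x z < f x z'"
    then have "in_top_k n k f A i"
      using in_top_k_if_score_le[OF wins] by (simp add: score_def x_def z_def)
    with loses show False ..
  qed
  have "k < n"
    using not_in_top_k_imp_less[OF \<open>i < n\<close> loses] .
  define P where "P = (\<lambda>j. if j < n then (x, z') else undefined)"
  have P: "P \<in> profiles n I s"
    unfolding P_def using z' by (rule constant_profile_in_profiles)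
  obtain j where "j < k" and audit_j: "0 \<le> \<phi> P j" "\<phi> P j \<le> min 1 (B / real k)"
    using budget_ok_ex_low_audit[OF budget P \<open>k \<ge> 1\<close>] \<open>k < n\<close> by auto
  have "j < n"
    using \<open>j < k\<close> \<open>k < n\<close> by simp
  define Q where "Q = P(j := (x, z))"
  have Q: "Q \<in> profiles n I s"
    unfolding Q_def using P \<open>j < n\<close> snd_profile_in_self_types[OF A \<open>i < n\<close>]
    by (simp add: z_def profile_update_in_profiles)
  have lie_Q: "Q(j := (fst (Q j), z')) = P"
    using \<open>j < n\<close> by (auto simp: Q_def P_def fun_eq_iff)
  have "\<not> in_top_k n k f Q j"
    using score_lt \<open>j < n\<close> \<open>k < n\<close>
    by (intro not_in_top_k_if_lowest_score) (auto simp: Q_def P_def score_def)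
  moreover have "in_top_k n k f P j"
    using \<open>j < n\<close> \<open>j < k\<close>
    by (intro in_top_k_if_scores_equal[of n f P "f x z'"]) (simp_all add: P_def score_def)
  moreover have "z' \<noteq> snd (Q j)"
    using score_lt by (auto simp: Q_def)
  ultimately have gain_Q: "deviation_gain n k f c \<phi> Q j z' = 1 - (1 + c) * \<phi> P j"
    using deviation_gain_lie_entering_top_k[of z' Q j] lie_Q by simp
  have "deviation_gain n k f c \<phi> Q j z' \<le> \<epsilon>"
    using DSIC Q \<open>j < n\<close> z' by (simp add: eps_DSIC_iff_deviation_gain_le)
  moreover have "(1 + c) * \<phi> P j \<le> (1 + c) * min 1 (B / real k)"
    using audit_j \<open>c \<ge> 0\<close> by (intro mult_left_mono) auto
  ultimately show ?thesis
    using gain_Q by linarith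
qed

lemma deviation_gain_uniform_k_le_eps_DSIC:
  assumes "k \<ge> 1" and "B \<ge> 0" and "c \<ge> 0"
    and "A \<in> profiles n I s" and "i < n" and "z' \<in> self_types I s"
    and "budget_ok n I s B \<phi>" and "eps_DSIC n k I s f c \<phi> \<epsilon>"
  shows "deviation_gain n k f c (uniform_k n k f B) A i z' \<le> \<epsilon>"
  using deviation_gain_uniform_k[OF assms(1-3), of n f A i z']
proof
  assume "deviation_gain n k f c (uniform_k n k f B) A i z' \<le> 0"
  with eps_DSIC_nonneg[OF assms(8,4,5)] show ?thesis
    by linarith
next
  assume "z' \<noteq> snd (A i) \<and> \<not> in_top_k n k f A i \<and> in_top_k n k f (A(i := (fst (A i), z'))) i
    \<and> deviation_gain n k f c (uniform_k n k f B) A i z' = 1 - (1 + c) * min 1 (B / real k)"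
  with eps_DSIC_lower_bound[OF assms(1,3-6) _ _ assms(7,8)] show ?thesis
    by simp
qed

theorem mainTheorem6:
  fixes n k s :: nat and I :: "real set" and f :: "'x \<Rightarrow> real list \<Rightarrow> real"
    and B c :: real
  assumes "k \<ge> 1" and "B \<ge> 0" and "c \<ge> 0"
  shows "budget_ok n I s B (uniform_k n k f B)
    \<and> eps_DSIC n k I s f c (uniform_k n k f B)
        (Inf {\<epsilon>. \<exists>\<phi>::'x policy. budget_ok n I s B \<phi> \<and> eps_DSIC n k I s f c \<phi> \<epsilon>})"
proof -
  define S where "S = {\<epsilon>. \<exists>\<phi>::'x policy. budget_ok n I s B \<phi> \<and> eps_DSIC n k I s f c \<phi> \<epsilon>}"
  have budget: "budget_ok n I s B (uniform_k n k f B)"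
    using assms(1,2) by (rule budget_ok_uniform_k)
  have "deviation_gain n k f c (uniform_k n k f B) A i z' \<le> max 0 (1 - (1 + c) * min 1 (B / real k))"
    for A i z'
    using deviation_gain_uniform_k[OF assms, of n f A i z'] by linarith
  then have "eps_DSIC n k I s f c (uniform_k n k f B) (max 0 (1 - (1 + c) * min 1 (B / real k)))"
    by (simp add: eps_DSIC_iff_deviation_gain_le)
  with budget have "S \<noteq> {}"
    by (auto simp: S_def)
  have "deviation_gain n k f c (uniform_k n k f B) A i z' \<le> Inf S"
    if "A \<in> profiles n I s" "i < n" "z' \<in> self_types I s" for A i z'
    using \<open>S \<noteq> {}\<close> deviation_gain_uniform_k_le_eps_DSIC[OF assms that]
    by (intro cInf_greatest) (auto simp: S_def)
  then have "eps_DSIC n k I s f c (uniform_k n k f B) (Inf S)"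
    by (simp add: eps_DSIC_iff_deviation_gain_le)
  with budget show ?thesis
    by (simp add: S_def)
qed

end
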